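(* Let $(X,d)$ be a Hadamard space, $\mathbf a$ a mask, $S$ the associated barycentric scheme, and $(X_n^{\mathbf a})_{n\ge0}$ the characteristic Markov chain of $\mathbf a$. Let $x\in\ell^\infty(\mathbb Z^s,X)$ and $n\in\mathbb N$. Then for every initial distribution $\alpha$ on $\mathbb Z^s$, $$(S^nx)\circ X_0^{\mathbf a}=E\big(x\circ X_n^{\mathbf a}\,\big|\big|\big|\,\mathcal F_0\big)\quad \mathbb P_\alpha\text{-almost surely},$$ where the filtered conditional expectation is taken with respect to the filtration $\mathcal F_0\subseteq\mathcal F_1\subseteq\dots\subseteq\mathcal F_n$ and the measure $\mathbb P_\alpha$.
   Context: Hadamard space: complete metric space $(X,d)$ such that for any $x_0,x_1\in X$ there is $y$ with $d(z,y)^2\le\frac12d(z,x_0)^2+\frac12d(z,x_1)^2-\frac14d(x_0,x_1)^2$ for all $z$. Mask: finitely supported nonnegative $(a_i)_{i\in\mathbb Z^s}$ with $\sum_j a_{i-2j}=1$ for all $i$. Barycentric scheme: $Sx_i=\operatorname{argmin}_{y\in X}\sum_j a_{i-2j}d^2(x_j,y)$ on $\ell^\infty(\mathbb Z^s,X)$. Define $a^{(0)}_i=\delta_{i,0}$ and $a^{(n+1)}_i=\sum_{j}a_{i-2j}a^{(n)}_j$. Characteristic Markov chain: on $\Omega=(\mathbb Z^s)^{\mathbb N_0}$ with product $\sigma$-algebra $\mathcal F$, let $X_n^{\mathbf a}(\omega)=\omega_n$, let $\mathcal F_n$ be the $\sigma$-algebra generated by $X_0^{\mathbf a},\dots,X_n^{\mathbf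 a}$, and for a probability distribution $\alpha$ on $\mathbb Z^s$ let $\mathbb P_\alpha$ be the probability measure with $\mathbb P_\alpha(X_0=i_0,\dots,X_n=i_n)=\alpha_{i_0}\prod_{k=1}^n a_{i_{k-1}-2i_k}$; its $m$-step transition probabilities are $p_{n,n+m}(i,j)=a^{(m)}_{i-2^mj}$. Conditional expectation (Sturm): for a sub-$\sigma$-algebra $\mathcal G$ and a square-integrable $X$-valued random variable $Y$ with separable image, $E(Y|\mathcal G)$ is the a.s. unique $\mathcal G$-measurable square-integrable $Z$ minimizing $Z'\mapsto E\,d^2(Y,Z')$ over $\mathcal G$-measurable square-integrable $Z'$. Filtered conditional expectation: for $\mathcal F_0\subseteq\dots\subseteq\mathcal F_N$ and $\mathcal F_N$-measurable $Y$, $E(Y|||\mathcal F_0)=E(\cdots E(E(Y|\mathcal F_{N-1})|\mathcal F_{N-2})\cdots|\mathcal F_0)$. *)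

theory Defs
  imports "HOL-Probability.Probability"
begin

text \<open>Lattice points of Z^s are modelled as int^'s (dimension s = CARD('s)).\<close>

definition hadamard :: "'a::complete_space itself \<Rightarrow> bool" where
  "hadamard _ \<longleftrightarrow> (\<forall>x0 x1::'a. \<exists>y. \<forall>z.
      (dist z y)^2 \<le> (dist z x0)^2 / 2 + (dist z x1)^2 / 2 - (dist x0 x1)^2 / 4)"

definition mask :: "(int^'s \<Rightarrow> real) \<Rightarrow> bool" where
  "mask a \<longleftrightarrow> finite {i. a i \<noteq> 0} \<and> (\<forall>i. 0 \<le> a i) \<and>
     (\<forall>i. (\<Sum>j\<in>{j. a (i - 2 *s j) \<noteq> 0}. a (i - 2 *s j)) = 1)"

definition bary_scheme :: "(int^'s \<Rightarrow> real) \<Rightarrow> (int^'s \<Rightarrow> 'a::metric_space) \<Rightarrow> int^'s \<Rightarrow> 'a" where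
  "bary_scheme a x i = (SOME y. \<forall>y'.
      (\<Sum>j\<in>{j. a (i - 2 *s j) \<noteq> 0}. a (i - 2 *s j) * (dist (x j) y)^2)
      \<le> (\<Sum>j\<in>{j. a (i - 2 *s j) \<noteq> 0}. a (i - 2 *s j) * (dist (x j) y')^2))"

text \<open>P_alpha: a probability measure on the product sigma algebra of (Z^s)^N with the
  prescribed cylinder probabilities (such a measure is unique).\<close>
definition markov_measure :: "(int^'s \<Rightarrow> real) \<Rightarrow> (int^'s \<Rightarrow> real) \<Rightarrow> (nat \<Rightarrow> int^'s) measure \<Rightarrow> bool" where
  "markov_measure a \<alpha> M \<longleftrightarrow> prob_space M \<and>
     sets M = sets (PiM UNIV (\<lambda>_. count_space UNIV)) \<and>
     (\<forall>n (i::nat \<Rightarrow> int^'s). measure M {\<omega>\<in>space M. \<forall>k\<le>n. \<omega> k = i k}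
        = \<alpha> (i 0) * (\<Prod>k\<in>{1..n}. a (i (k - 1) - 2 *s i k)))"

definition chain_filtration :: "(nat \<Rightarrow> 'b) measure \<Rightarrow> nat \<Rightarrow> (nat \<Rightarrow> 'b) measure" where
  "chain_filtration M k = sigma (space M) {{\<omega>\<in>space M. \<omega> j = i} | j i. j \<le> k}"

definition separable_range :: "('w \<Rightarrow> 'a::topological_space) \<Rightarrow> 'w set \<Rightarrow> bool" where
  "separable_range Y A \<longleftrightarrow> (\<exists>C. countable C \<and> Y ` A \<subseteq> closure C)"

definition L2rv :: "'w measure \<Rightarrow> 'w measure \<Rightarrow> ('w \<Rightarrow> 'a::metric_space) \<Rightarrow> bool" where
  "L2rv M G Z \<longleftrightarrow> Z \<in> measurable G borel \<and> separable_range Z (space M) \<and>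
     (\<exists>z. integrable M (\<lambda>\<omega>. (dist (Z \<omega>) z)^2))"

text \<open>Sturm's conditional expectation: Z is (a version of) E(Y|G).\<close>
definition is_cond_exp :: "'w measure \<Rightarrow> 'w measure \<Rightarrow> ('w \<Rightarrow> 'a::metric_space) \<Rightarrow> ('w \<Rightarrow> 'a) \<Rightarrow> bool" where
  "is_cond_exp M G Y Z \<longleftrightarrow> L2rv M G Z \<and>
     (\<forall>Z'. L2rv M G Z' \<longrightarrow>
        (\<integral>\<omega>. (dist (Y \<omega>) (Z \<omega>))^2 \<partial>M) \<le> (\<integral>\<omega>. (dist (Y \<omega>) (Z' \<omega>))^2 \<partial>M))"

definition is_filtered_cond_exp :: "'w measure \<Rightarrow> (nat \<Rightarrow> 'w measure) \<Rightarrow> nat \<Rightarrow> ('w \<Rightarrow> 'a::metric_space) \<Rightarrow> ('w \<Rightarrow> 'a) \<Rightarrow> bool" where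
  "is_filtered_cond_exp M F N Y Z \<longleftrightarrow> (\<exists>W. W N = Y \<and>
     (\<forall>k<N. is_cond_exp M (F k) (W (Suc k)) (W k)) \<and> Z = W 0)"

end

theory Submission
  imports Defs
begin

text \<open>
  The proof has three ingredients.
  (1) Geometry: in a Hadamard space every weighted sum \<open>y \<mapsto> \<Sum>\<^sub>j w\<^sub>j d(p\<^sub>j, y)\<^sup>2\<close> is
      uniformly convex along midpoints, so minimizing sequences are Cauchy and the barycentre
      exists; hence S is well defined on bounded sequences and preserves boundedness.
  (2) The Markov property: \<open>\<F>\<^sub>k\<close>-measurable variables are exactly functions of the path
      prefix \<open>(X\<^sub>0, \<dots>, X\<^sub>k)\<close>, and integrating a function of \<open>(X\<^sub>0, \<dots>, X\<^sub>k\<^sub>+\<^sub>1)\<close>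
      averages the last state with the weights \<open>a(X\<^sub>k - 2j)\<close>. Consequently
      \<open>E d(h(X\<^sub>k\<^sub>+\<^sub>1), W)\<^sup>2\<close> is the mean of the weighted sum minimized by \<open>(S h)(X\<^sub>k)\<close>, so
      \<open>(S h)(X\<^sub>k) = E(h(X\<^sub>k\<^sub>+\<^sub>1) | \<F>\<^sub>k)\<close>.
  (3) Uniqueness: two minimizers of \<open>Z \<mapsto> E d(Y, Z)\<^sup>2\<close> agree almost surely, by the midpoint
      inequality applied to their pointwise midpoint; this propagates backwards along the
      filtration. Iterating (2) gives a version of the filtered conditional expectation,
      and (3) shows every version coincides with it.
\<close>

section \<open>Midpoints and barycentres in Hadamard spaces\<close>

definition hadamard_midpoint :: "'a::complete_space \<Rightarrow> 'a \<Rightarrow> 'a" where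
  "hadamard_midpoint p q = (SOME m. \<forall>z. (dist z m)^2 \<le> (dist z p)^2/2 + (dist z q)^2/2 - (dist p q)^2/4)"

lemma hadamard_midpoint_ineq:
  fixes p q z :: "'a::complete_space"
  assumes "hadamard TYPE('a)"
  shows "(dist z (hadamard_midpoint p q))^2 \<le> (dist z p)^2/2 + (dist z q)^2/2 - (dist p q)^2/4"
proof -
  have "\<exists>m. \<forall>z. (dist z m)^2 \<le> (dist z p)^2/2 + (dist z q)^2/2 - (dist p q)^2/4"
    using assms unfolding hadamard_def by blast
  from someI_ex[OF this] show ?thesis unfolding hadamard_midpoint_def by blast
qed

text \<open>For a function that is uniformly convex along midpoints, every minimizing sequence
  is Cauchy: two almost-minimizers have an almost-minimal midpoint, which forces them close.\<close>
lemma midpoint_convex_minimizing_Cauchy: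
  fixes F :: "'a::metric_space \<Rightarrow> real" and ys :: "nat \<Rightarrow> 'a"
  assumes mid: "\<And>y1 y2. \<exists>m. F m \<le> F y1/2 + F y2/2 - (dist y1 y2)^2/4"
    and lower: "\<And>y. c \<le> F y" and ys: "\<And>n. F (ys n) < c + 1/(real n+1)"
  shows "Cauchy ys"
proof (rule metric_CauchyI)
  have close: "(dist (ys n) (ys m))^2 < 2/(real n+1) + 2/(real m+1)" for n m
  proof -
    obtain mm where "F mm \<le> F (ys n)/2 + F (ys m)/2 - (dist (ys n) (ys m))^2/4" using mid by blast
    moreover have "2/(real n+1) = 2*(1/(real n+1))" "2/(real m+1) = 2*(1/(real m+1))" by auto
    ultimately show ?thesis using ys[of n] ys[of m] lower[of mm] by linarith
  qed
  fix e :: real assume e: "0 < e"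
  obtain N :: nat where N: "4 / e^2 < real N" using reals_Archimedean2 by blast
  have small: "4/(real N+1) < e^2" using N e by (simp add: field_simps) (smt (verit) zero_less_power)
  show "\<exists>M. \<forall>m\<ge>M. \<forall>n\<ge>M. dist (ys m) (ys n) < e"
  proof (intro exI allI impI)
    fix m n assume mn: "N \<le> m" "N \<le> n"
    have "2/(real m+1) \<le> 2/(real N+1)" "2/(real n+1) \<le> 2/(real N+1)" using mn
      by (auto intro!: divide_left_mono)
    then have "(dist (ys m) (ys n))^2 < e^2" using close[of m n] small by linarith
    then show "dist (ys m) (ys n) < e" using e by (simp add: power_less_imp_less_base)
  qed
qed

lemma midpoint_convex_min_exists:
  fixes F :: "'a::complete_space \<Rightarrow> real"
  assumes cont: "continuous_on UNIV F" and bdd: "bdd_below (range F)"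
    and mid: "\<And>y1 y2. \<exists>m. F m \<le> F y1/2 + F y2/2 - (dist y1 y2)^2/4"
  shows "\<exists>y. \<forall>y'. F y \<le> F y'"
proof -
  define c where "c = Inf (range F)"
  have lower: "c \<le> F y" for y unfolding c_def using bdd by (intro cInf_lower) auto
  have "\<exists>y. F y < c + 1/(real n+1)" for n
  proof (rule ccontr)
    assume "\<not> ?thesis"
    then have "c + 1/(real n+1) \<le> c" unfolding c_def by (intro cInf_greatest) (auto simp: not_less)
    moreover have "1/(real n+1) > 0" by auto
    ultimately show False by linarith
  qed
  then obtain ys where ys: "\<And>n. F (ys n) < c + 1/(real n+1)" by metis
  have "Cauchy ys" by (rule midpoint_convex_minimizing_Cauchy[OF mid lower ys])
  then obtain y where lim: "ys \<longlonglongrightarrow> y" using Cauchy_convergent_iff convergent_def by blast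
  have "(\<lambda>n. F (ys n)) \<longlonglongrightarrow> F y"
    using continuous_on_tendsto_compose[OF cont lim] by simp
  moreover have "(\<lambda>n. F (ys n)) \<longlonglongrightarrow> c"
  proof (rule tendsto_sandwich[of "\<lambda>n. c" _ _ "\<lambda>n. c + 1/(real n+1)"])
    show "\<forall>\<^sub>F n in sequentially. c \<le> F (ys n)" using lower by auto
    show "\<forall>\<^sub>F n in sequentially. F (ys n) \<le> c + 1/(real n+1)"
      using ys less_imp_le by (intro always_eventually) blast
    have "(\<lambda>n. 1/(real n+1)) \<longlonglongrightarrow> 0"
      using LIMSEQ_inverse_real_of_nat by (simp add: inverse_eq_divide add.commute)
    then show "(\<lambda>n. c + 1/(real n+1)) \<longlonglongrightarrow> c" using tendsto_add[of "\<lambda>n. c" c sequentially] by fastforce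
  qed simp
  ultimately have "F y = c" using LIMSEQ_unique by blast
  then show ?thesis using lower by metis
qed

lemma weighted_sq_dist_midpoint:
  fixes p :: "'j \<Rightarrow> 'a::complete_space"
  assumes H: "hadamard TYPE('a)" and w0: "\<forall>j\<in>J. 0 \<le> w j" and w1: "(\<Sum>j\<in>J. w j) = 1"
  shows "(\<Sum>j\<in>J. w j * (dist (p j) (hadamard_midpoint y1 y2))^2)
    \<le> (\<Sum>j\<in>J. w j * (dist (p j) y1)^2)/2 + (\<Sum>j\<in>J. w j * (dist (p j) y2)^2)/2 - (dist y1 y2)^2/4"
proof -
  have "(\<Sum>j\<in>J. w j * (dist (p j) (hadamard_midpoint y1 y2))^2)
      \<le> (\<Sum>j\<in>J. w j * ((dist (p j) y1)^2/2 + (dist (p j) y2)^2/2 - (dist y1 y2)^2/4))"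
    using w0 hadamard_midpoint_ineq[OF H] by (intro sum_mono mult_left_mono) auto
  also have "\<dots> = (\<Sum>j\<in>J. w j * (dist (p j) y1)^2)/2 + (\<Sum>j\<in>J. w j * (dist (p j) y2)^2)/2
      - (dist y1 y2)^2/4 * (\<Sum>j\<in>J. w j)"
    by (simp add: algebra_simps sum.distrib sum_subtractf sum_distrib_left sum_distrib_right sum_divide_distrib)
  finally show ?thesis using w1 by simp
qed

lemma weighted_barycenter_exists:
  fixes p :: "'j \<Rightarrow> 'a::complete_space"
  assumes H: "hadamard TYPE('a)" and fin: "finite J" and w0: "\<forall>j\<in>J. 0 \<le> w j"
    and w1: "(\<Sum>j\<in>J. w j) = 1"
  shows "\<exists>y. \<forall>y'. (\<Sum>j\<in>J. w j * (dist (p j) y)^2) \<le> (\<Sum>j\<in>J. w j * (dist (p j) y')^2)"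
proof (rule midpoint_convex_min_exists)
  show "continuous_on UNIV (\<lambda>y. \<Sum>j\<in>J. w j * (dist (p j) y)^2)"
    by (intro continuous_intros)
  show "bdd_below (range (\<lambda>y. \<Sum>j\<in>J. w j * (dist (p j) y)^2))"
    using w0 by (intro bdd_belowI[of _ 0]) (auto intro!: sum_nonneg)
  show "\<exists>m. (\<Sum>j\<in>J. w j * (dist (p j) m)^2) \<le> (\<Sum>j\<in>J. w j * (dist (p j) y1)^2)/2
      + (\<Sum>j\<in>J. w j * (dist (p j) y2)^2)/2 - (dist y1 y2)^2/4" for y1 y2
    using weighted_sq_dist_midpoint[OF H w0 w1] by blast
qed

text \<open>A minimizer of the weighted squared distances to points lying in a ball of radius R
  is within distance 2R of the centre: some point with positive weight is within R of it.\<close>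
lemma barycenter_near_points:
  fixes p :: "'j \<Rightarrow> 'a::metric_space"
  assumes fin: "finite J" and w0: "\<forall>j\<in>J. 0 < w j" and w1: "(\<Sum>j\<in>J. w j) = 1"
    and min: "(\<Sum>j\<in>J. w j * (dist (p j) y)^2) \<le> (\<Sum>j\<in>J. w j * (dist (p j) z)^2)"
    and R: "\<And>j. dist z (p j) \<le> R"
  shows "dist z y \<le> 2 * R"
proof -
  have R0: "0 \<le> R" using R[of undefined] zero_le_dist[of z "p undefined"] by linarith
  have sumR: "(\<Sum>j\<in>J. w j * R^2) = R^2" using w1 by (simp add: sum_distrib_right[symmetric])
  have "(\<Sum>j\<in>J. w j * (dist (p j) z)^2) \<le> (\<Sum>j\<in>J. w j * R^2)"
    using w0 R by (intro sum_mono mult_left_mono power_mono) (auto simp: dist_commute less_imp_le)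
  with min sumR have le: "(\<Sum>j\<in>J. w j * (dist (p j) y)^2) \<le> R^2" by linarith
  have "\<exists>j\<in>J. dist (p j) y \<le> R"
  proof (rule ccontr)
    assume "\<not> ?thesis"
    then have far: "\<forall>j\<in>J. R < dist (p j) y" by auto
    have "J \<noteq> {}" using w1 by auto
    then have "(\<Sum>j\<in>J. w j * R^2) < (\<Sum>j\<in>J. w j * (dist (p j) y)^2)"
      using far R0 w0 by (intro sum_strict_mono[OF fin] mult_strict_left_mono power_strict_mono) auto
    with le sumR show False by linarith
  qed
  then obtain j where "dist (p j) y \<le> R" by blast
  then show ?thesis using R[of j] dist_triangle[of z y "p j"] by linarith
qed

section \<open>Masks and the barycentric scheme\<close>

definition mask_support :: "(int^'s \<Rightarrow> real) \<Rightarrow> int^'s \<Rightarrow> (int^'s) set" where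
  "mask_support a i = {j. a (i - 2 *s j) \<noteq> 0}"

lemma mask_support_finite:
  fixes a :: "int^'s \<Rightarrow> real"
  assumes "mask a" shows "finite (mask_support a i)"
proof -
  have "inj (\<lambda>j::int^'s. i - 2 *s j)" by (auto simp: inj_def vec_eq_iff)
  moreover have "finite {k. a k \<noteq> 0}" using assms unfolding mask_def by auto
  ultimately have "finite ((\<lambda>j::int^'s. i - 2 *s j) -` {k. a k \<noteq> 0})"
    by (intro finite_vimageI) auto
  then show ?thesis unfolding mask_support_def by (simp add: vimage_def)
qed

lemma mask_support_sum: "mask a \<Longrightarrow> (\<Sum>j\<in>mask_support a i. a (i - 2 *s j)) = 1"
  unfolding mask_def mask_support_def by auto

lemma mask_support_pos: "mask a \<Longrightarrow> j \<in> mask_support a i \<Longrightarrow> 0 < a (i - 2 *s j)"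
  unfolding mask_def mask_support_def by (metis less_eq_real_def mem_Collect_eq)

lemma mask_nonneg: "mask a \<Longrightarrow> 0 \<le> a i"
  unfolding mask_def by auto

lemma bary_scheme_minimizes:
  fixes x :: "int^'s \<Rightarrow> 'a::complete_space"
  assumes H: "hadamard TYPE('a)" and m: "mask a"
  shows "(\<Sum>j\<in>mask_support a i. a (i - 2 *s j) * (dist (x j) (bary_scheme a x i))^2)
     \<le> (\<Sum>j\<in>mask_support a i. a (i - 2 *s j) * (dist (x j) y)^2)"
proof -
  have "\<exists>y. \<forall>y'. (\<Sum>j\<in>mask_support a i. a (i - 2 *s j) * (dist (x j) y)^2)
      \<le> (\<Sum>j\<in>mask_support a i. a (i - 2 *s j) * (dist (x j) y')^2)"
    using mask_support_pos[OF m] less_imp_le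
    by (intro weighted_barycenter_exists[OF H mask_support_finite[OF m] _ mask_support_sum[OF m]]) blast
  from someI_ex[OF this] show ?thesis unfolding bary_scheme_def mask_support_def[symmetric] by blast
qed

lemma bary_scheme_bounded:
  fixes x :: "int^'s \<Rightarrow> 'a::complete_space"
  assumes H: "hadamard TYPE('a)" and m: "mask a" and b: "bounded (range x)"
  shows "bounded (range (bary_scheme a x))"
proof -
  fix z :: 'a
  obtain R where R: "\<And>j. dist z (x j) \<le> R" using b unfolding bounded_any_center[of _ z] by auto
  have "dist z (bary_scheme a x i) \<le> 2 * R" for i
    using mask_support_pos[OF m] bary_scheme_minimizes[OF H m] R
    by (intro barycenter_near_points[OF mask_support_finite[OF m] _ mask_support_sum[OF m]]) auto
  then have "range (bary_scheme a x) \<subseteq> cball z (2*R)" by auto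
  then show ?thesis using bounded_cball bounded_subset by blast
qed

lemma bary_scheme_iter_bounded:
  fixes x :: "int^'s \<Rightarrow> 'a::complete_space"
  assumes "hadamard TYPE('a)" and "mask a" and "bounded (range x)"
  shows "bounded (range ((bary_scheme a ^^ k) x))"
  by (induction k) (auto intro: bary_scheme_bounded[OF assms(1,2)] assms(3))

text \<open>The first K+1 states of a path; lists make the countability of the values explicit.\<close>
definition path_prefix :: "nat \<Rightarrow> (nat \<Rightarrow> 'b) \<Rightarrow> 'b list" where
  "path_prefix K \<omega> = map \<omega> [0..<Suc K]"

lemma path_prefix_nth: "m \<le> K \<Longrightarrow> path_prefix K \<omega> ! m = \<omega> m"
  unfolding path_prefix_def by (simp del: upt_Suc add: nth_map_upt less_Suc_eq_le)

lemma path_prefix_length [simp]: "length (path_prefix K \<omega>) = Suc K"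
  unfolding path_prefix_def by simp

lemma path_prefix_eq_iff:
  "path_prefix K \<omega> = xs \<longleftrightarrow> length xs = Suc K \<and> (\<forall>m\<le>K. \<omega> m = xs ! m)"
proof
  assume "path_prefix K \<omega> = xs" then show "length xs = Suc K \<and> (\<forall>m\<le>K. \<omega> m = xs ! m)"
    using path_prefix_nth[of _ K \<omega>] by auto
next
  assume "length xs = Suc K \<and> (\<forall>m\<le>K. \<omega> m = xs ! m)"
  then show "path_prefix K \<omega> = xs"
    by (auto simp: list_eq_iff_nth_eq path_prefix_nth less_Suc_eq_le)
qed

lemma path_prefix_eq_iff2: "path_prefix K \<omega> = path_prefix K \<omega>' \<longleftrightarrow> (\<forall>m\<le>K. \<omega> m = \<omega>' m)"
  unfolding path_prefix_eq_iff by (auto simp: path_prefix_nth)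

lemma path_prefix_Suc: "path_prefix (Suc K) \<omega> = path_prefix K \<omega> @ [\<omega> (Suc K)]"
  unfolding path_prefix_def by simp

lemma path_prefix_vimage:
  "path_prefix K -` {xs} = (if length xs = Suc K then (\<Inter>m\<in>{..K}. {\<omega>. \<omega> m = xs ! m}) else {})"
  by (auto simp: path_prefix_nth) (auto simp: path_prefix_eq_iff)

definition determined_by :: "nat \<Rightarrow> ((nat \<Rightarrow> 'b) \<Rightarrow> 'c) \<Rightarrow> bool" where
  "determined_by K Z \<longleftrightarrow> (\<forall>\<omega> \<omega>'. path_prefix K \<omega> = path_prefix K \<omega>' \<longrightarrow> Z \<omega> = Z \<omega>')"

lemma determined_by_state: "m \<le> K \<Longrightarrow> determined_by K (\<lambda>\<omega>. h (\<omega> m))"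
  unfolding determined_by_def path_prefix_eq_iff2 by auto

lemma determined_by_repr:
  "determined_by K Z \<Longrightarrow> Z \<omega> = Z (\<lambda>m. path_prefix K \<omega> ! m)"
  unfolding determined_by_def path_prefix_eq_iff2 by (metis path_prefix_nth)

lemma determined_by_factor:
  "determined_by K Z \<Longrightarrow> (\<lambda>\<omega>. (\<lambda>xs. Z (\<lambda>m. xs ! m)) (path_prefix K \<omega>)) = Z"
  by (rule ext) (rule determined_by_repr[symmetric])

lemma determined_by_mono: "determined_by K Z \<Longrightarrow> K \<le> K' \<Longrightarrow> determined_by K' Z"
  unfolding determined_by_def path_prefix_eq_iff2 by (meson order_trans)

lemma determined_by_comb:
  "determined_by K f \<Longrightarrow> determined_by K g \<Longrightarrow> determined_by K (\<lambda>\<omega>. F (f \<omega>) (g \<omega>))"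
  unfolding determined_by_def by metis

lemma determined_by_countable_range:
  assumes "determined_by K (Z :: (nat \<Rightarrow> 'b::countable) \<Rightarrow> 'c)"
  shows "countable (range Z)"
proof -
  have "range Z \<subseteq> (\<lambda>xs. Z (\<lambda>m. xs ! m)) ` UNIV"
  proof (rule image_subsetI)
    fix \<omega>
    have "Z \<omega> = (\<lambda>xs. Z (\<lambda>m. xs ! m)) (path_prefix K \<omega>)"
      by (rule determined_by_repr[OF assms])
    then show "Z \<omega> \<in> (\<lambda>xs. Z (\<lambda>m. xs ! m)) ` UNIV" by (rule image_eqI) simp
  qed
  moreover have "countable ((\<lambda>xs. Z (\<lambda>m. xs ! m)) ` (UNIV :: 'b list set))" by simp
  ultimately show ?thesis by (rule countable_subset)
qed

lemma determined_by_separable: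
  assumes "determined_by K (Z :: (nat \<Rightarrow> 'b::countable) \<Rightarrow> 'c::topological_space)"
  shows "separable_range Z A"
  unfolding separable_range_def
proof (intro exI conjI)
  show "countable (range Z)" by (rule determined_by_countable_range[OF assms])
  have "Z ` A \<subseteq> range Z" by (rule image_mono) simp
  then show "Z ` A \<subseteq> closure (range Z)" using closure_subset by (rule order_trans)
qed

lemma integrable_dist2:
  fixes f g :: "'w \<Rightarrow> 'a::metric_space"
  assumes "finite_measure M"
    and "integrable M (\<lambda>\<omega>. (dist (f \<omega>) p)^2)" "integrable M (\<lambda>\<omega>. (dist (g \<omega>) q)^2)"
    and "(\<lambda>\<omega>. (dist (f \<omega>) (g \<omega>))^2) \<in> borel_measurable M"
  shows "integrable M (\<lambda>\<omega>. (dist (f \<omega>) (g \<omega>))^2)"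
proof (rule Bochner_Integration.integrable_bound)
  interpret finite_measure M by (rule assms(1))
  show "integrable M (\<lambda>\<omega>. 3 * (dist (f \<omega>) p)^2 + 3 * (dist p q)^2 + 3 * (dist (g \<omega>) q)^2)"
    using assms(2,3) by (intro Bochner_Integration.integrable_add integrable_mult_right) auto
  show "AE \<omega> in M. norm ((dist (f \<omega>) (g \<omega>))^2)
      \<le> norm (3 * (dist (f \<omega>) p)^2 + 3 * (dist p q)^2 + 3 * (dist (g \<omega>) q)^2)"
  proof (rule AE_I2)
    fix \<omega>
    have "dist (f \<omega>) (g \<omega>) \<le> dist (f \<omega>) p + dist p q + dist (g \<omega>) q"
      by (metis add.commute dist_commute dist_triangle2 dist_triangle_le add_mono order_refl)
    then have "(dist (f \<omega>) (g \<omega>))^2 \<le> (dist (f \<omega>) p + dist p q + dist (g \<omega>) q)^2"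
      by (intro power_mono) auto
    also have "\<dots> \<le> 3 * (dist (f \<omega>) p)^2 + 3 * (dist p q)^2 + 3 * (dist (g \<omega>) q)^2"
      by (smt (verit) sum_squares_ge_zero power2_sum zero_le_power2 power2_diff)
    finally show "norm ((dist (f \<omega>) (g \<omega>))^2)
        \<le> norm (3 * (dist (f \<omega>) p)^2 + 3 * (dist p q)^2 + 3 * (dist (g \<omega>) q)^2)" by simp
  qed
qed (use assms(4) in simp)

text \<open>Uniqueness principle behind Sturm's conditional expectation: if Z1 and Z2 both minimize
  the mean squared distance to Y against each other and against their pointwise midpoint,
  the parallelogram-type inequality of a Hadamard space forces Z1 = Z2 almost everywhere.\<close>
lemma hadamard_minimizers_ae_eq:
  fixes Y Z1 Z2 :: "'w \<Rightarrow> 'a::complete_space"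
  defines "Mid \<equiv> \<lambda>\<omega>. hadamard_midpoint (Z1 \<omega>) (Z2 \<omega>)"
  assumes H: "hadamard TYPE('a)"
    and iY1: "integrable M (\<lambda>\<omega>. (dist (Y \<omega>) (Z1 \<omega>))^2)"
    and iY2: "integrable M (\<lambda>\<omega>. (dist (Y \<omega>) (Z2 \<omega>))^2)"
    and iYM: "integrable M (\<lambda>\<omega>. (dist (Y \<omega>) (Mid \<omega>))^2)"
    and i12: "integrable M (\<lambda>\<omega>. (dist (Z1 \<omega>) (Z2 \<omega>))^2)"
    and le1: "(\<integral>\<omega>. (dist (Y \<omega>) (Z1 \<omega>))^2 \<partial>M) \<le> (\<integral>\<omega>. (dist (Y \<omega>) (Mid \<omega>))^2 \<partial>M)"
    and le2: "(\<integral>\<omega>. (dist (Y \<omega>) (Z2 \<omega>))^2 \<partial>M) \<le> (\<integral>\<omega>. (dist (Y \<omega>) (Z1 \<omega>))^2 \<partial>M)"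
  shows "AE \<omega> in M. Z1 \<omega> = Z2 \<omega>"
proof -
  have "(\<integral>\<omega>. 4 * (dist (Y \<omega>) (Mid \<omega>))^2 + (dist (Z1 \<omega>) (Z2 \<omega>))^2 \<partial>M)
      \<le> (\<integral>\<omega>. 2 * (dist (Y \<omega>) (Z1 \<omega>))^2 + 2 * (dist (Y \<omega>) (Z2 \<omega>))^2 \<partial>M)"
  proof (rule integral_mono)
    fix \<omega>
    show "4 * (dist (Y \<omega>) (Mid \<omega>))^2 + (dist (Z1 \<omega>) (Z2 \<omega>))^2
      \<le> 2 * (dist (Y \<omega>) (Z1 \<omega>))^2 + 2 * (dist (Y \<omega>) (Z2 \<omega>))^2"
      using hadamard_midpoint_ineq[OF H, of "Y \<omega>" "Z1 \<omega>" "Z2 \<omega>"] unfolding Mid_def by simp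
    show "integrable M (\<lambda>\<omega>. 4 * (dist (Y \<omega>) (Mid \<omega>))^2 + (dist (Z1 \<omega>) (Z2 \<omega>))^2)"
      using iYM i12 by (intro Bochner_Integration.integrable_add integrable_mult_right)
    show "integrable M (\<lambda>\<omega>. 2 * (dist (Y \<omega>) (Z1 \<omega>))^2 + 2 * (dist (Y \<omega>) (Z2 \<omega>))^2)"
      using iY1 iY2 by (intro Bochner_Integration.integrable_add integrable_mult_right)
  qed
  also have "(\<integral>\<omega>. 4 * (dist (Y \<omega>) (Mid \<omega>))^2 + (dist (Z1 \<omega>) (Z2 \<omega>))^2 \<partial>M)
     = 4 * (\<integral>\<omega>. (dist (Y \<omega>) (Mid \<omega>))^2 \<partial>M) + (\<integral>\<omega>. (dist (Z1 \<omega>) (Z2 \<omega>))^2 \<partial>M)"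
    using iYM i12 by (subst Bochner_Integration.integral_add) auto
  also have "(\<integral>\<omega>. 2 * (dist (Y \<omega>) (Z1 \<omega>))^2 + 2 * (dist (Y \<omega>) (Z2 \<omega>))^2 \<partial>M)
     = 2 * (\<integral>\<omega>. (dist (Y \<omega>) (Z1 \<omega>))^2 \<partial>M) + 2 * (\<integral>\<omega>. (dist (Y \<omega>) (Z2 \<omega>))^2 \<partial>M)"
    using iY1 iY2 by (subst Bochner_Integration.integral_add) auto
  finally have "(\<integral>\<omega>. (dist (Z1 \<omega>) (Z2 \<omega>))^2 \<partial>M) \<le> 0" using le1 le2 by linarith
  moreover have "0 \<le> (\<integral>\<omega>. (dist (Z1 \<omega>) (Z2 \<omega>))^2 \<partial>M)" by (rule integral_nonneg_AE) simp
  ultimately have "AE \<omega> in M. (dist (Z1 \<omega>) (Z2 \<omega>))^2 = 0"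
    using integral_nonneg_eq_0_iff_AE[OF i12] by simp
  then show ?thesis by eventually_elim simp
qed

lemma nn_integral_count_space_finite_support:
  fixes h :: "'b \<Rightarrow> ennreal"
  assumes "finite A" "\<And>j. j \<notin> A \<Longrightarrow> h j = 0"
  shows "(\<integral>\<^sup>+ j. h j \<partial>count_space UNIV) = (\<Sum>j\<in>A. h j)"
proof -
  have "(\<integral>\<^sup>+ j. h j \<partial>count_space UNIV) = (\<integral>\<^sup>+ j. h j * indicator A j \<partial>count_space UNIV)"
    using assms(2) by (intro nn_integral_cong) (auto split: split_indicator)
  also have "\<dots> = (\<integral>\<^sup>+ j. h j \<partial>count_space A)"
    by (rule nn_integral_count_space_indicator[symmetric]) simp
  also have "\<dots> = (\<Sum>j\<in>A. h j)" using assms(1) by (rule nn_integral_count_space_finite)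
  finally show ?thesis .
qed

lemma nn_integral_count_space_snoc:
  fixes h :: "'b::countable list \<Rightarrow> ennreal"
  assumes "h [] = 0"
  shows "(\<integral>\<^sup>+ xs. h xs \<partial>count_space UNIV)
    = (\<integral>\<^sup>+ ys. \<integral>\<^sup>+ j. h (ys @ [j]) \<partial>count_space UNIV \<partial>count_space UNIV)"
proof -
  have bij: "bij_betw (\<lambda>(ys, j). ys @ [j]) (UNIV \<times> UNIV) (UNIV - {[] :: 'b list})"
    by (rule bij_betw_byWitness[where f' = "\<lambda>xs. (butlast xs, last xs)"]) auto
  have "(\<integral>\<^sup>+ xs. h xs \<partial>count_space UNIV) = (\<integral>\<^sup>+ xs. h xs * indicator (UNIV - {[]}) xs \<partial>count_space UNIV)"
    using assms by (intro nn_integral_cong) (auto split: split_indicator)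
  also have "\<dots> = (\<integral>\<^sup>+ xs. h xs \<partial>count_space (UNIV - {[]}))"
    by (rule nn_integral_count_space_indicator[symmetric]) simp
  also have "\<dots> = (\<integral>\<^sup>+ p. h (fst p @ [snd p]) \<partial>count_space (UNIV \<times> UNIV))"
    using nn_integral_bij_count_space[OF bij, of h] by (simp add: case_prod_beta)
  also have "\<dots> = (\<integral>\<^sup>+ p. h (fst p @ [snd p]) \<partial>(count_space UNIV \<Otimes>\<^sub>M count_space UNIV))"
    by (subst pair_measure_countable) auto
  also have "\<dots> = (\<integral>\<^sup>+ ys. \<integral>\<^sup>+ j. h (ys @ [j]) \<partial>count_space UNIV \<partial>count_space UNIV)"
    by (subst sigma_finite_measure.nn_integral_fst[OF sigma_finite_measure_count_space, symmetric])
       (auto simp: pair_measure_countable)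
  finally show ?thesis .
qed

lemma integral_mono_via_nn_integral:
  fixes f g :: "'w \<Rightarrow> real"
  assumes "integrable M f" "integrable M g" "\<And>\<omega>. 0 \<le> f \<omega>" "\<And>\<omega>. 0 \<le> g \<omega>"
    and "(\<integral>\<^sup>+ \<omega>. ennreal (f \<omega>) \<partial>M) \<le> (\<integral>\<^sup>+ \<omega>. ennreal (g \<omega>) \<partial>M)"
  shows "(\<integral>\<omega>. f \<omega> \<partial>M) \<le> (\<integral>\<omega>. g \<omega> \<partial>M)"
proof -
  have "ennreal (\<integral>\<omega>. f \<omega> \<partial>M) \<le> ennreal (\<integral>\<omega>. g \<omega> \<partial>M)"
    using assms by (simp add: nn_integral_eq_integral)
  moreover have "0 \<le> (\<integral>\<omega>. g \<omega> \<partial>M)" using assms(4) by (rule integral_nonneg_AE[OF AE_I2])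
  ultimately show ?thesis by (simp add: ennreal_le_iff)
qed

section \<open>The characteristic Markov chain\<close>

locale markov_chain =
  fixes a :: "int^'s \<Rightarrow> real" and \<alpha> :: "int^'s \<Rightarrow> real" and M :: "(nat \<Rightarrow> int^'s) measure"
  assumes markov: "markov_measure a \<alpha> M"
begin

lemma sets_M: "sets M = sets (PiM UNIV (\<lambda>_. count_space UNIV))"
  using markov unfolding markov_measure_def by auto

lemma space_M: "space M = UNIV"
  using sets_eq_imp_space_eq[OF sets_M] by (simp add: space_PiM)

sublocale prob_space M
  using markov unfolding markov_measure_def by auto

lemma state_event_measurable: "{\<omega>. \<omega> j = i} \<in> sets M"
proof -
  have "(\<lambda>\<omega>. \<omega> j) \<in> measurable (PiM UNIV (\<lambda>_. count_space (UNIV::(int^'s) set))) (count_space UNIV)"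
    by (rule measurable_component_singleton) auto
  then have "(\<lambda>\<omega>. \<omega> j) \<in> measurable M (count_space UNIV)"
    using measurable_cong_sets[OF sets_M refl] by blast
  from measurable_sets[OF this, of "{i}"] show ?thesis using space_M by (simp add: vimage_def)
qed

lemma path_prefix_measurable: "path_prefix K \<in> measurable M (count_space UNIV)"
  by (subst measurable_count_space_eq_countable)
     (auto simp: path_prefix_vimage space_M state_event_measurable)

lemma sets_chain_filtration:
  "sets (chain_filtration M k) = sigma_sets UNIV {{\<omega>. \<omega> j = i} | j i. j \<le> k}"
  unfolding chain_filtration_def space_M by (subst sets_measure_of) auto

lemma space_chain_filtration: "space (chain_filtration M k) = UNIV"
  unfolding chain_filtration_def space_M by (subst space_measure_of) auto

lemma path_prefix_measurable_filtration:
  "path_prefix k \<in> measurable (chain_filtration M k) (count_space UNIV)"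
proof -
  have "(\<Inter>m\<in>{..k}. {\<omega>. \<omega> m = xs ! m}) \<in> sets (chain_filtration M k)" for xs :: "(int^'s) list"
  proof (rule sets.finite_INT)
    show "\<And>m. m \<in> {..k} \<Longrightarrow> {\<omega>. \<omega> m = xs ! m} \<in> sets (chain_filtration M k)"
      unfolding sets_chain_filtration by (rule sigma_sets.Basic) auto
  qed auto
  then show ?thesis
    by (subst measurable_count_space_eq_countable) (auto simp: path_prefix_vimage space_chain_filtration)
qed

lemma filtration_event_saturated:
  assumes "B \<in> sets (chain_filtration M k)" "path_prefix k \<omega> = path_prefix k \<omega>'" "\<omega> \<in> B"
  shows "\<omega>' \<in> B"
proof -
  have "\<forall>\<omega> \<omega>'. path_prefix k \<omega> = path_prefix k \<omega>' \<longrightarrow> \<omega> \<in> B \<longrightarrow> \<omega>' \<in> B"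
    using assms(1) unfolding sets_chain_filtration
  proof (induction rule: sigma_sets.induct)
    case (Basic b)
    then show ?case by (auto simp: path_prefix_eq_iff2)
  next
    case (Compl b)
    show ?case
    proof (intro allI impI)
      fix \<omega> \<omega>' assume same: "path_prefix k \<omega> = path_prefix k \<omega>'" and "\<omega> \<in> UNIV - b"
      have "\<omega>' \<notin> b"
      proof
        assume "\<omega>' \<in> b"
        then have "\<omega> \<in> b" using Compl.IH same[symmetric] by blast
        then show False using \<open>\<omega> \<in> UNIV - b\<close> by simp
      qed
      then show "\<omega>' \<in> UNIV - b" by simp
    qed
  next
    case (Union A)
    show ?case
    proof (intro allI impI)
      fix \<omega> \<omega>' assume same: "path_prefix k \<omega> = path_prefix k \<omega>'" and "\<omega> \<in> \<Union> (range A)"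
      then obtain i where "\<omega> \<in> A i" by blast
      then have "\<omega>' \<in> A i" using Union.IH same by blast
      then show "\<omega>' \<in> \<Union> (range A)" by blast
    qed
  qed simp
  then show ?thesis using assms(2,3) by blast
qed

lemma measurable_filtration_determined:
  fixes Z :: "(nat \<Rightarrow> int^'s) \<Rightarrow> 'a::metric_space"
  assumes "Z \<in> measurable (chain_filtration M k) borel"
  shows "determined_by k Z"
  unfolding determined_by_def
proof (intro allI impI)
  fix \<omega> \<omega>' :: "nat \<Rightarrow> int^'s" assume same: "path_prefix k \<omega> = path_prefix k \<omega>'"
  have "Z -` {Z \<omega>} \<inter> space (chain_filtration M k) \<in> sets (chain_filtration M k)"
    using assms by (rule measurable_sets) (intro borel_closed closed_singleton)
  then have "Z -` {Z \<omega>} \<in> sets (chain_filtration M k)" unfolding space_chain_filtration by simp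
  from filtration_event_saturated[OF this same] show "Z \<omega> = Z \<omega>'" by simp
qed

lemma determined_measurable_filtration:
  assumes "determined_by K Z"
  shows "Z \<in> measurable (chain_filtration M K) borel"
proof -
  have "(\<lambda>\<omega>. (\<lambda>xs. Z (\<lambda>m. xs ! m)) (path_prefix K \<omega>)) \<in> measurable (chain_filtration M K) borel"
    by (rule measurable_compose[OF path_prefix_measurable_filtration]) simp
  then show ?thesis by (simp only: determined_by_factor[OF assms])
qed

lemma determined_measurable:
  assumes "determined_by K Z"
  shows "Z \<in> borel_measurable M"
proof -
  have "(\<lambda>\<omega>. (\<lambda>xs. Z (\<lambda>m. xs ! m)) (path_prefix K \<omega>)) \<in> borel_measurable M"
    by (rule measurable_compose[OF path_prefix_measurable]) simp
  then show ?thesis by (simp only: determined_by_factor[OF assms])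
qed

lemma L2rv_determined:
  fixes Z :: "(nat \<Rightarrow> int^'s) \<Rightarrow> 'a::metric_space"
  shows "L2rv M (chain_filtration M k) Z \<Longrightarrow> determined_by k Z"
  unfolding L2rv_def by (intro measurable_filtration_determined) blast

lemma integrable_dist2_determined:
  fixes f g :: "(nat \<Rightarrow> int^'s) \<Rightarrow> 'a::metric_space"
  assumes "determined_by K f" "determined_by K g"
    and "integrable M (\<lambda>\<omega>. (dist (f \<omega>) p)^2)" "integrable M (\<lambda>\<omega>. (dist (g \<omega>) q)^2)"
  shows "integrable M (\<lambda>\<omega>. (dist (f \<omega>) (g \<omega>))^2)"
proof (rule integrable_dist2[OF finite_measure_axioms assms(3,4)])
  show "(\<lambda>\<omega>. (dist (f \<omega>) (g \<omega>))^2) \<in> borel_measurable M"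
    using assms(1,2) by (intro determined_measurable[of K]) (rule determined_by_comb)
qed

lemma L2rv_bounded:
  fixes Z :: "(nat \<Rightarrow> int^'s) \<Rightarrow> 'a::metric_space"
  assumes "determined_by k Z" "bounded (range Z)"
  shows "L2rv M (chain_filtration M k) Z"
proof -
  fix z :: 'a
  obtain R where R: "\<And>\<omega>. dist z (Z \<omega>) \<le> R"
    using assms(2) unfolding bounded_any_center[of _ z] by auto
  have "integrable M (\<lambda>\<omega>. (dist (Z \<omega>) z)^2)"
  proof (rule integrable_const_bound[where B = "R^2"])
    show "AE \<omega> in M. norm ((dist (Z \<omega>) z)^2) \<le> R^2"
      using R by (intro AE_I2) (simp add: dist_commute power_mono)
    show "(\<lambda>\<omega>. (dist (Z \<omega>) z)^2) \<in> borel_measurable M"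
      using assms(1) determined_by_state[of 0 0]
      by (intro determined_measurable[of k] determined_by_comb[where F = "\<lambda>u v. (dist u z)^2"])
  qed
  then show ?thesis unfolding L2rv_def
    using determined_measurable_filtration[OF assms(1)] determined_by_separable[OF assms(1)] by blast
qed

subsection \<open>The Markov property in integrated form\<close>

definition prefix_law :: "nat \<Rightarrow> (int^'s) list \<Rightarrow> ennreal" where
  "prefix_law K xs = emeasure M (path_prefix K -` {xs})"

definition path_weight :: "nat \<Rightarrow> (int^'s) list \<Rightarrow> real" where
  "path_weight K xs = \<alpha> (xs ! 0) * (\<Prod>k\<in>{1..K}. a (xs ! (k - 1) - 2 *s xs ! k))"

lemma nn_integral_path_prefix:
  "(\<integral>\<^sup>+ \<omega>. g (path_prefix K \<omega>) \<partial>M) = (\<integral>\<^sup>+ xs. prefix_law K xs * g xs \<partial>count_space UNIV)"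
proof -
  have law: "distr M (count_space UNIV) (path_prefix K) = density (count_space UNIV) (prefix_law K)"
  proof (rule measure_eqI_countable[where A = UNIV])
    fix xs :: "(int^'s) list"
    show "emeasure (distr M (count_space UNIV) (path_prefix K)) {xs}
        = emeasure (density (count_space UNIV) (prefix_law K)) {xs}"
      by (simp add: emeasure_distr[OF path_prefix_measurable] emeasure_density prefix_law_def space_M)
  qed auto
  have "(\<integral>\<^sup>+ \<omega>. g (path_prefix K \<omega>) \<partial>M) = (\<integral>\<^sup>+ xs. g xs \<partial>distr M (count_space UNIV) (path_prefix K))"
    by (subst nn_integral_distr[OF path_prefix_measurable]) auto
  also have "\<dots> = (\<integral>\<^sup>+ xs. prefix_law K xs * g xs \<partial>count_space UNIV)"
    unfolding law by (subst nn_integral_density) auto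
  finally show ?thesis .
qed

lemma path_weight_eq_measure:
  assumes "length xs = Suc K"
  shows "measure M (path_prefix K -` {xs}) = path_weight K xs"
proof -
  have "path_prefix K -` {xs} = {\<omega>\<in>space M. \<forall>k\<le>K. \<omega> k = (\<lambda>m. xs ! m) k}"
    using assms by (auto simp: space_M path_prefix_eq_iff path_prefix_nth)
  then show ?thesis using markov unfolding markov_measure_def path_weight_def by simp
qed

lemma prefix_law_eq: "prefix_law K xs = (if length xs = Suc K then ennreal (path_weight K xs) else 0)"
proof (cases "length xs = Suc K")
  case True
  then show ?thesis using path_weight_eq_measure[OF True]
    unfolding prefix_law_def by (simp add: emeasure_eq_measure)
next
  case False
  then show ?thesis unfolding prefix_law_def by (simp add: path_prefix_vimage)
qed

lemma path_weight_nonneg: "length xs = Suc K \<Longrightarrow> 0 \<le> path_weight K xs"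
  using path_weight_eq_measure by (metis measure_nonneg)

lemma path_weight_snoc:
  assumes "length ys = Suc K"
  shows "path_weight (Suc K) (ys @ [j]) = path_weight K ys * a (ys ! K - 2 *s j)"
proof -
  have "(\<Prod>k\<in>{1..K}. a ((ys @ [j]) ! (k - 1) - 2 *s (ys @ [j]) ! k))
      = (\<Prod>k\<in>{1..K}. a (ys ! (k - 1) - 2 *s ys ! k))"
    using assms by (intro prod.cong) (auto simp: nth_append)
  then show ?thesis using assms unfolding path_weight_def by (simp add: prod.cl_ivl_Suc nth_append)
qed

lemma markov_step_nn_integral:
  fixes f :: "(int^'s) list \<Rightarrow> ennreal"
  assumes ma: "mask a"
  shows "(\<integral>\<^sup>+ \<omega>. f (path_prefix (Suc K) \<omega>) \<partial>M)
    = (\<integral>\<^sup>+ \<omega>. (\<Sum>j\<in>mask_support a (\<omega> K). ennreal (a (\<omega> K - 2 *s j)) * f (path_prefix K \<omega> @ [j])) \<partial>M)"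
proof -
  define g where "g ys = (\<Sum>j\<in>mask_support a (ys ! K). ennreal (a (ys ! K - 2 *s j)) * f (ys @ [j]))" for ys
  have step: "(\<integral>\<^sup>+ j. prefix_law (Suc K) (ys @ [j]) * f (ys @ [j]) \<partial>count_space UNIV) = prefix_law K ys * g ys"
    for ys
  proof (cases "length ys = Suc K")
    case True
    have "(\<integral>\<^sup>+ j. prefix_law (Suc K) (ys @ [j]) * f (ys @ [j]) \<partial>count_space UNIV)
        = (\<Sum>j\<in>mask_support a (ys ! K). prefix_law (Suc K) (ys @ [j]) * f (ys @ [j]))"
      using True by (intro nn_integral_count_space_finite_support mask_support_finite[OF ma])
        (auto simp: prefix_law_eq path_weight_snoc mask_support_def)
    also have "\<dots> = (\<Sum>j\<in>mask_support a (ys ! K). prefix_law K ys * (ennreal (a (ys ! K - 2 *s j)) * f (ys @ [j])))"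
      using True path_weight_nonneg[OF True] mask_nonneg[OF ma]
      by (intro sum.cong) (simp_all add: prefix_law_eq path_weight_snoc ennreal_mult' mult.assoc)
    finally show ?thesis unfolding g_def by (simp add: sum_distrib_left)
  qed (simp add: prefix_law_eq)
  have "(\<integral>\<^sup>+ \<omega>. f (path_prefix (Suc K) \<omega>) \<partial>M)
      = (\<integral>\<^sup>+ xs. prefix_law (Suc K) xs * f xs \<partial>count_space UNIV)"
    by (rule nn_integral_path_prefix)
  also have "\<dots> = (\<integral>\<^sup>+ ys. \<integral>\<^sup>+ j. prefix_law (Suc K) (ys @ [j]) * f (ys @ [j]) \<partial>count_space UNIV \<partial>count_space UNIV)"
    by (rule nn_integral_count_space_snoc) (simp add: prefix_law_eq)
  also have "\<dots> = (\<integral>\<^sup>+ ys. prefix_law K ys * g ys \<partial>count_space UNIV)"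
    by (simp add: step)
  also have "\<dots> = (\<integral>\<^sup>+ \<omega>. g (path_prefix K \<omega>) \<partial>M)"
    by (rule nn_integral_path_prefix[symmetric])
  finally show ?thesis by (simp add: g_def path_prefix_nth)
qed

text \<open>The mean squared distance from \<open>h(X\<^sub>k\<^sub>+\<^sub>1)\<close> to an \<open>\<F>\<^sub>k\<close>-measurable W is the mean of the
  weighted sum minimized by the barycentric scheme.\<close>
lemma expected_sq_dist_step:
  fixes h :: "int^'s \<Rightarrow> 'a::metric_space" and W :: "(nat \<Rightarrow> int^'s) \<Rightarrow> 'a"
  assumes ma: "mask a" and dW: "determined_by k W"
  shows "(\<integral>\<^sup>+ \<omega>. ennreal ((dist (h (\<omega> (Suc k))) (W \<omega>))^2) \<partial>M)
       = (\<integral>\<^sup>+ \<omega>. ennreal (\<Sum>j\<in>mask_support a (\<omega> k). a (\<omega> k - 2 *s j) * (dist (h j) (W \<omega>))^2) \<partial>M)"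
proof -
  define f where "f xs = ennreal ((dist (h (last xs)) (W (\<lambda>m. butlast xs ! m)))^2)" for xs
  have rep: "W (\<lambda>m. path_prefix k \<omega> ! m) = W \<omega>" for \<omega>
    using determined_by_repr[OF dW, of \<omega>] by simp
  have nn: "0 \<le> a (\<omega> k - 2 *s j)" for \<omega> j by (rule mask_nonneg[OF ma])
  have "(\<integral>\<^sup>+ \<omega>. ennreal ((dist (h (\<omega> (Suc k))) (W \<omega>))^2) \<partial>M) = (\<integral>\<^sup>+ \<omega>. f (path_prefix (Suc k) \<omega>) \<partial>M)"
    by (simp add: f_def path_prefix_Suc rep)
  also have "\<dots> = (\<integral>\<^sup>+ \<omega>. (\<Sum>j\<in>mask_support a (\<omega> k). ennreal (a (\<omega> k - 2 *s j)) * f (path_prefix k \<omega> @ [j])) \<partial>M)"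
    by (rule markov_step_nn_integral[OF ma])
  also have "\<dots> = (\<integral>\<^sup>+ \<omega>. ennreal (\<Sum>j\<in>mask_support a (\<omega> k). a (\<omega> k - 2 *s j) * (dist (h j) (W \<omega>))^2) \<partial>M)"
    by (intro nn_integral_cong) (simp add: f_def rep nn ennreal_mult'[symmetric] sum_ennreal)
  finally show ?thesis .
qed

text \<open>Conditionally on the past,
  \<open>X\<^sub>k\<^sub>+\<^sub>1\<close> is distributed according to the weights \<open>a(X\<^sub>k - 2j)\<close>, and the barycentric
  scheme minimizes the corresponding weighted sum pointwise.\<close>
lemma cond_exp_step:
  fixes h :: "int^'s \<Rightarrow> 'a::complete_space"
  assumes H: "hadamard TYPE('a)" and ma: "mask a" and hb: "bounded (range h)"
  shows "is_cond_exp M (chain_filtration M k) (\<lambda>\<omega>. h (\<omega> (Suc k))) (\<lambda>\<omega>. bary_scheme a h (\<omega> k))"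
proof -
  define Y where "Y \<omega> = h (\<omega> (Suc k))" for \<omega> :: "nat \<Rightarrow> int^'s"
  define Z where "Z \<omega> = bary_scheme a h (\<omega> k)" for \<omega> :: "nat \<Rightarrow> int^'s"
  have dY: "determined_by (Suc k) Y" unfolding Y_def by (rule determined_by_state) simp
  have dZ: "determined_by k Z" unfolding Z_def by (rule determined_by_state) simp
  have "bounded (range Y)" unfolding Y_def using hb by (rule bounded_subset) auto
  then have "L2rv M (chain_filtration M (Suc k)) Y" by (rule L2rv_bounded[OF dY])
  then obtain y where iY: "integrable M (\<lambda>\<omega>. (dist (Y \<omega>) y)^2)" unfolding L2rv_def by blast
  have "bounded (range Z)" unfolding Z_def
    using bary_scheme_bounded[OF H ma hb] by (rule bounded_subset) auto
  then have L2Z: "L2rv M (chain_filtration M k) Z" by (rule L2rv_bounded[OF dZ])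
  have integrable_to_Y: "integrable M (\<lambda>\<omega>. (dist (Y \<omega>) (W \<omega>))^2)"
    if LW: "L2rv M (chain_filtration M k) W" for W
  proof -
    obtain w where "integrable M (\<lambda>\<omega>. (dist (W \<omega>) w)^2)" using LW unfolding L2rv_def by blast
    moreover have "determined_by (Suc k) W" using L2rv_determined[OF LW] by (rule determined_by_mono) simp
    ultimately show ?thesis using integrable_dist2_determined[OF dY _ iY] by blast
  qed
  have "(\<integral>\<omega>. (dist (Y \<omega>) (Z \<omega>))^2 \<partial>M) \<le> (\<integral>\<omega>. (dist (Y \<omega>) (Z' \<omega>))^2 \<partial>M)"
    if L2: "L2rv M (chain_filtration M k) Z'" for Z'
  proof (rule integral_mono_via_nn_integral[OF integrable_to_Y[OF L2Z] integrable_to_Y[OF L2]])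
    show "(\<integral>\<^sup>+ \<omega>. ennreal ((dist (Y \<omega>) (Z \<omega>))^2) \<partial>M) \<le> (\<integral>\<^sup>+ \<omega>. ennreal ((dist (Y \<omega>) (Z' \<omega>))^2) \<partial>M)"
      unfolding Y_def expected_sq_dist_step[OF ma dZ] expected_sq_dist_step[OF ma L2rv_determined[OF L2]]
      unfolding Z_def by (intro nn_integral_mono ennreal_leI bary_scheme_minimizes[OF H ma])
  qed simp_all
  then show ?thesis unfolding is_cond_exp_def using L2Z unfolding Y_def Z_def by blast
qed

text \<open>Uniqueness of Sturm's conditional expectation on \<open>\<F>\<^sub>k\<close>: the pointwise midpoint of two
  versions is again a competitor, so the minimizer uniqueness principle for Hadamard spaces applies.\<close>
lemma cond_exp_unique:
  fixes Y Z1 Z2 :: "(nat \<Rightarrow> int^'s) \<Rightarrow> 'a::complete_space"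
  assumes H: "hadamard TYPE('a)"
    and c1: "is_cond_exp M (chain_filtration M k) Y Z1"
    and c2: "is_cond_exp M (chain_filtration M k) Y Z2"
    and dY: "determined_by (Suc k) Y" and iY: "integrable M (\<lambda>\<omega>. (dist (Y \<omega>) y)^2)"
  shows "AE \<omega> in M. Z1 \<omega> = Z2 \<omega>"
proof -
  define Mid where "Mid \<omega> = hadamard_midpoint (Z1 \<omega>) (Z2 \<omega>)" for \<omega>
  have L1: "L2rv M (chain_filtration M k) Z1" and L2: "L2rv M (chain_filtration M k) Z2"
    using c1 c2 unfolding is_cond_exp_def by auto
  have d1: "determined_by k Z1" and d2: "determined_by k Z2"
    using L2rv_determined L1 L2 by auto
  have dMid: "determined_by k Mid" unfolding Mid_def using d1 d2 by (rule determined_by_comb)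
  have dY': "determined_by (Suc k) Z" if "determined_by k Z" for Z :: "_ \<Rightarrow> 'a"
    using that by (rule determined_by_mono) simp
  obtain z1 where i1: "integrable M (\<lambda>\<omega>. (dist (Z1 \<omega>) z1)^2)" using L1 unfolding L2rv_def by blast
  obtain z2 where i2: "integrable M (\<lambda>\<omega>. (dist (Z2 \<omega>) z2)^2)" using L2 unfolding L2rv_def by blast
  have const: "determined_by k (\<lambda>\<omega>. z1)" and "integrable M (\<lambda>\<omega>. (dist z1 z1)^2)"
    by (simp_all add: determined_by_def)
  then have i21: "integrable M (\<lambda>\<omega>. (dist (Z2 \<omega>) z1)^2)"
    by (intro integrable_dist2_determined[OF d2 const i2])
  have iMid: "integrable M (\<lambda>\<omega>. (dist (Mid \<omega>) z1)^2)"
  proof (rule Bochner_Integration.integrable_bound)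
    show "integrable M (\<lambda>\<omega>. (dist (Z1 \<omega>) z1)^2/2 + (dist (Z2 \<omega>) z1)^2/2)"
      using i1 i21 by (intro Bochner_Integration.integrable_add integrable_divide)
    show "(\<lambda>\<omega>. (dist (Mid \<omega>) z1)^2) \<in> borel_measurable M"
      using dMid const by (intro determined_measurable[of k]) (rule determined_by_comb)
    show "AE \<omega> in M. norm ((dist (Mid \<omega>) z1)^2) \<le> norm ((dist (Z1 \<omega>) z1)^2/2 + (dist (Z2 \<omega>) z1)^2/2)"
    proof (rule AE_I2)
      fix \<omega>
      have "(dist z1 (Mid \<omega>))^2 \<le> (dist z1 (Z1 \<omega>))^2/2 + (dist z1 (Z2 \<omega>))^2/2"
        using hadamard_midpoint_ineq[OF H, of z1 "Z1 \<omega>" "Z2 \<omega>"] zero_le_power2[of "dist (Z1 \<omega>) (Z2 \<omega>)"]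
        unfolding Mid_def by linarith
      then show "norm ((dist (Mid \<omega>) z1)^2) \<le> norm ((dist (Z1 \<omega>) z1)^2/2 + (dist (Z2 \<omega>) z1)^2/2)"
        by (simp add: dist_commute)
    qed
  qed
  have LMid: "L2rv M (chain_filtration M k) Mid"
    unfolding L2rv_def using determined_measurable_filtration[OF dMid] determined_by_separable[OF dMid] iMid
    by blast
  show ?thesis unfolding Mid_def[symmetric]
  proof (rule hadamard_minimizers_ae_eq[OF H])
    show "integrable M (\<lambda>\<omega>. (dist (Y \<omega>) (Z1 \<omega>))^2)"
      by (rule integrable_dist2_determined[OF dY dY'[OF d1] iY i1])
    show "integrable M (\<lambda>\<omega>. (dist (Y \<omega>) (Z2 \<omega>))^2)"
      by (rule integrable_dist2_determined[OF dY dY'[OF d2] iY i2])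
    show "integrable M (\<lambda>\<omega>. (dist (Y \<omega>) (hadamard_midpoint (Z1 \<omega>) (Z2 \<omega>)))^2)"
      using integrable_dist2_determined[OF dY dY'[OF dMid] iY iMid] unfolding Mid_def .
    show "integrable M (\<lambda>\<omega>. (dist (Z1 \<omega>) (Z2 \<omega>))^2)"
      by (rule integrable_dist2_determined[OF d1 d2 i1 i2])
    show "(\<integral>\<omega>. (dist (Y \<omega>) (Z1 \<omega>))^2 \<partial>M) \<le> (\<integral>\<omega>. (dist (Y \<omega>) (hadamard_midpoint (Z1 \<omega>) (Z2 \<omega>)))^2 \<partial>M)"
      using c1 LMid unfolding is_cond_exp_def Mid_def by blast
    show "(\<integral>\<omega>. (dist (Y \<omega>) (Z2 \<omega>))^2 \<partial>M) \<le> (\<integral>\<omega>. (dist (Y \<omega>) (Z1 \<omega>))^2 \<partial>M)"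
      using c2 L1 unfolding is_cond_exp_def by blast
  qed
qed

lemma cond_exp_cong_ae:
  fixes Y1 Y2 Z :: "(nat \<Rightarrow> int^'s) \<Rightarrow> 'a::metric_space"
  assumes c: "is_cond_exp M (chain_filtration M k) Y1 Z" and ae: "AE \<omega> in M. Y1 \<omega> = Y2 \<omega>"
    and d1: "determined_by (Suc k) Y1" and d2: "determined_by (Suc k) Y2"
  shows "is_cond_exp M (chain_filtration M k) Y2 Z"
proof -
  have eq: "(\<integral>\<omega>. (dist (Y1 \<omega>) (W \<omega>))^2 \<partial>M) = (\<integral>\<omega>. (dist (Y2 \<omega>) (W \<omega>))^2 \<partial>M)"
    if "L2rv M (chain_filtration M k) W" for W
  proof (rule integral_cong_AE)
    have dW: "determined_by (Suc k) W" using L2rv_determined[OF that] by (rule determined_by_mono) simp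
    show "(\<lambda>\<omega>. (dist (Y1 \<omega>) (W \<omega>))^2) \<in> borel_measurable M"
      using d1 dW by (intro determined_measurable[of "Suc k"]) (rule determined_by_comb)
    show "(\<lambda>\<omega>. (dist (Y2 \<omega>) (W \<omega>))^2) \<in> borel_measurable M"
      using d2 dW by (intro determined_measurable[of "Suc k"]) (rule determined_by_comb)
    show "AE \<omega> in M. (dist (Y1 \<omega>) (W \<omega>))^2 = (dist (Y2 \<omega>) (W \<omega>))^2"
      using ae by eventually_elim simp
  qed
  show ?thesis using c eq unfolding is_cond_exp_def by auto
qed

lemma filtered_cond_exp_unique:
  fixes Y Z1 Z2 :: "(nat \<Rightarrow> int^'s) \<Rightarrow> 'a::complete_space"
  assumes H: "hadamard TYPE('a)"
    and f1: "is_filtered_cond_exp M (chain_filtration M) n Y Z1"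
    and f2: "is_filtered_cond_exp M (chain_filtration M) n Y Z2"
    and dY: "determined_by n Y" and iY: "integrable M (\<lambda>\<omega>. (dist (Y \<omega>) y)^2)"
  shows "AE \<omega> in M. Z1 \<omega> = Z2 \<omega>"
proof -
  obtain W1 where W1n: "W1 n = Y" and c1: "\<And>k. k < n \<Longrightarrow> is_cond_exp M (chain_filtration M k) (W1 (Suc k)) (W1 k)"
    and Z1: "Z1 = W1 0" using f1 unfolding is_filtered_cond_exp_def by blast
  obtain W2 where W2n: "W2 n = Y" and c2: "\<And>k. k < n \<Longrightarrow> is_cond_exp M (chain_filtration M k) (W2 (Suc k)) (W2 k)"
    and Z2: "Z2 = W2 0" using f2 unfolding is_filtered_cond_exp_def by blast
  have chain_L2: "determined_by k (W k) \<and> (\<exists>z. integrable M (\<lambda>\<omega>. (dist (W k \<omega>) z)^2))"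
    if "k \<le> n" "W n = Y" "\<And>k. k < n \<Longrightarrow> is_cond_exp M (chain_filtration M k) (W (Suc k)) (W k)" for W k
  proof (cases "k = n")
    case False
    then have "L2rv M (chain_filtration M k) (W k)" using that unfolding is_cond_exp_def by simp
    then show ?thesis using L2rv_determined unfolding L2rv_def by blast
  qed (use that dY iY in auto)
  have "AE \<omega> in M. W1 k \<omega> = W2 k \<omega>" if "k \<le> n" for k
    using that
  proof (induction k rule: inc_induct)
    case (step k)
    then have kn: "k < n" by simp
    obtain z where iz: "integrable M (\<lambda>\<omega>. (dist (W2 (Suc k) \<omega>) z)^2)"
      and d2: "determined_by (Suc k) (W2 (Suc k))" using chain_L2[OF _ W2n c2, of "Suc k"] kn by auto
    have d1: "determined_by (Suc k) (W1 (Suc k))" using chain_L2[OF _ W1n c1, of "Suc k"] kn by auto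
    have "is_cond_exp M (chain_filtration M k) (W2 (Suc k)) (W1 k)"
      by (rule cond_exp_cong_ae[OF c1[OF kn] step.IH d1 d2])
    then show ?case by (rule cond_exp_unique[OF H _ c2[OF kn] d2 iz])
  qed (simp add: W1n W2n)
  then show ?thesis unfolding Z1 Z2 by simp
qed

lemma filtered_cond_exp_scheme:
  fixes x :: "int^'s \<Rightarrow> 'a::complete_space"
  assumes H: "hadamard TYPE('a)" and ma: "mask a" and xb: "bounded (range x)"
  shows "is_filtered_cond_exp M (chain_filtration M) n (\<lambda>\<omega>. x (\<omega> n))
           (\<lambda>\<omega>. ((bary_scheme a ^^ n) x) (\<omega> 0))"
  unfolding is_filtered_cond_exp_def
proof (intro exI conjI allI impI)
  define V where "V k \<omega> = ((bary_scheme a ^^ (n - k)) x) (\<omega> k)" for k and \<omega> :: "nat \<Rightarrow> int^'s"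
  show "V n = (\<lambda>\<omega>. x (\<omega> n))" "(\<lambda>\<omega>. ((bary_scheme a ^^ n) x) (\<omega> 0)) = V 0"
    unfolding V_def by simp_all
  fix k assume "k < n"
  then have "n - k = Suc (n - Suc k)" by simp
  then have "V k = (\<lambda>\<omega>. bary_scheme a ((bary_scheme a ^^ (n - Suc k)) x) (\<omega> k))"
    unfolding V_def by auto
  then show "is_cond_exp M (chain_filtration M k) (V (Suc k)) (V k)"
    unfolding V_def[of "Suc k"] using cond_exp_step[OF H ma bary_scheme_iter_bounded[OF H ma xb]] by simp
qed

end

theorem mainTheorem2:
  fixes a :: "int^'s \<Rightarrow> real" and x :: "int^'s \<Rightarrow> 'a::complete_space"
    and \<alpha> :: "int^'s \<Rightarrow> real" and M :: "(nat \<Rightarrow> int^'s) measure" and n :: nat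
  assumes "hadamard TYPE('a)"
    and "mask a"
    and "bounded (range x)"
    and "\<forall>i. 0 \<le> \<alpha> i" and "(\<alpha> has_sum 1) UNIV"
    and "markov_measure a \<alpha> M"
  shows "(\<exists>Z. is_filtered_cond_exp M (chain_filtration M) n (\<lambda>\<omega>. x (\<omega> n)) Z) \<and>
         (\<forall>Z. is_filtered_cond_exp M (chain_filtration M) n (\<lambda>\<omega>. x (\<omega> n)) Z \<longrightarrow>
            (AE \<omega> in M. ((bary_scheme a ^^ n) x) (\<omega> 0) = Z \<omega>))"
proof -
  interpret markov_chain a \<alpha> M by (rule markov_chain.intro) fact
  have scheme: "is_filtered_cond_exp M (chain_filtration M) n (\<lambda>\<omega>. x (\<omega> n))
      (\<lambda>\<omega>. ((bary_scheme a ^^ n) x) (\<omega> 0))"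
    by (rule filtered_cond_exp_scheme) fact+
  have dX: "determined_by n (\<lambda>\<omega>. x (\<omega> n))" by (rule determined_by_state) simp
  have "bounded (range (\<lambda>\<omega>::nat \<Rightarrow> int^'s. x (\<omega> n)))"
    using \<open>bounded (range x)\<close> by (rule bounded_subset) auto
  then obtain y where iX: "integrable M (\<lambda>\<omega>. (dist (x (\<omega> n)) y)^2)"
    using L2rv_bounded[OF dX] unfolding L2rv_def by blast
  show ?thesis
    using scheme filtered_cond_exp_unique[OF \<open>hadamard TYPE('a)\<close> scheme _ dX iX] by blast
qed

end
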